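(* Let $\Phi(x,y)$ be a standard symmetric polynomial of partial degree $d$ and let $H$ be a finite, connected, $d$-regular graph on $[n]$ that is strongly $\Phi$-polynomial. If $C$ is a singular component of $G(\Phi)$ without defective vertices, then there exists an improper point $(u_1,\dots,u_n)\in U(H,\Phi)$ such that $C=\langle u_1,\dots,u_n\rangle$, and the map $i\mapsto u_i$ is a graph morphism from $H$ onto $C$.
   Context: For symmetric $\Phi(x,y)=\sum_{i=0}^d a_i(x)y^i\in\mathbb{C}[x,y]$ of partial degree $d$: $G(\Phi)$ has vertex set $\mathbb{C}$, neighbours of $u$ being the roots of $\Phi(u,y)$ (edges = points of $\mathbb{V}(\Phi)$). A vertex $u$ is defective if $a_d(u)=0$; a component is singular if it contains a loop ($\Phi(u,u)=0$), a multiple edge (multiple root of $\Phi(u,y)$) or a defective vertex. $\Phi$ is standard if it is squarefree, $\Phi(x,x)\not\equiv0$, and has no nonconstant factor depending only on $x$ (or only on $y$); $G(\Phi)^*$ is $G(\Phi)$ with its finitely many singular components removed. $H$ is strongly $\Phi$-polynomial if it is isomorphic to every component of $G(\Phi)^*$. $\langle u_1,\dots,u_n\rangle$ is the subgraph of $G(\Phi)$ induced by $u_1,\dots,u_n$. With $E$ the edge set of $H$: $W(H,\Phi)=\mathbb{V}(\{\Phi(x_i,x_j):ij\in E\})\subseteq\mathbb{C}^n$, $Z(H,\Phi)=W(H,\Phi)\cap\bigcup_{i>j}\mathbb{V}(x_i-x_j)$, $U(H,\Phi)=\overline{W(H,\Phi)\setminus Z(H,\Phi)}$; a point is improper if two of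 its coordinates coincide. *)

theory Defs
  imports "HOL-Analysis.Analysis" "HOL-Computational_Algebra.Computational_Algebra"
begin

text \<open>A bivariate polynomial Phi(x,y) = sum_i a_i(x) y^i is represented as an element of
  complex poly poly: a polynomial in y whose coefficients a_i are polynomials in x.\<close>

type_synonym bipoly = "complex poly poly"

definition Phi_at :: "bipoly \<Rightarrow> complex \<Rightarrow> complex poly" where
  "Phi_at Phi u = map_poly (\<lambda>a. poly a u) Phi"

definition bieval :: "bipoly \<Rightarrow> complex \<Rightarrow> complex \<Rightarrow> complex" where
  "bieval Phi u v = poly (Phi_at Phi u) v"

definition symmetric_bipoly :: "bipoly \<Rightarrow> bool" where
  "symmetric_bipoly Phi \<longleftrightarrow> (\<forall>u v. bieval Phi u v = bieval Phi v u)"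

text \<open>partial degree (degree in y; by symmetry equal to the degree in x)\<close>
definition partial_degree :: "bipoly \<Rightarrow> nat" where
  "partial_degree Phi = degree Phi"

definition standard :: "bipoly \<Rightarrow> bool" where
  "standard Phi \<longleftrightarrow> squarefree Phi \<and> (\<exists>u. bieval Phi u u \<noteq> 0)
     \<and> (\<forall>p::complex poly. degree p > 0 \<longrightarrow> \<not> [:p:] dvd Phi)
     \<and> (\<forall>p::complex poly. degree p > 0 \<longrightarrow> \<not> map_poly (\<lambda>c. [:c:]) p dvd Phi)"

definition G_adj :: "bipoly \<Rightarrow> complex \<Rightarrow> complex \<Rightarrow> bool" where
  "G_adj Phi u v \<longleftrightarrow> bieval Phi u v = 0"

definition component :: "bipoly \<Rightarrow> complex set \<Rightarrow> bool" where
  "component Phi C \<longleftrightarrow> (\<exists>u. C = {v. (G_adj Phi)\<^sup>*\<^sup>* u v})"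

definition defective :: "bipoly \<Rightarrow> complex \<Rightarrow> bool" where
  "defective Phi u \<longleftrightarrow> poly (coeff Phi (partial_degree Phi)) u = 0"

definition singular_component :: "bipoly \<Rightarrow> complex set \<Rightarrow> bool" where
  "singular_component Phi C \<longleftrightarrow> component Phi C \<and>
     ((\<exists>u\<in>C. G_adj Phi u u)
      \<or> (\<exists>u\<in>C. \<exists>v. [:-v, 1:] ^ 2 dvd Phi_at Phi u)
      \<or> (\<exists>u\<in>C. defective Phi u))"

text \<open>Finite graphs H with vertex set a finite type 'n (standing for [n]), given by a
  symmetric irreflexive edge relation E.\<close>
definition simple_graph :: "('n::finite \<Rightarrow> 'n \<Rightarrow> bool) \<Rightarrow> bool" where
  "simple_graph E \<longleftrightarrow> (\<forall>i j. E i j \<longrightarrow> E j i) \<and> (\<forall>i. \<not> E i i)"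

definition connected_graph :: "('n::finite \<Rightarrow> 'n \<Rightarrow> bool) \<Rightarrow> bool" where
  "connected_graph E \<longleftrightarrow> (\<forall>i j. E\<^sup>*\<^sup>* i j)"

definition regular_graph :: "('n::finite \<Rightarrow> 'n \<Rightarrow> bool) \<Rightarrow> nat \<Rightarrow> bool" where
  "regular_graph E d \<longleftrightarrow> (\<forall>i. card {j. E i j} = d)"

text \<open>H is isomorphic to every component of G(Phi)^* (= non-singular components).\<close>
definition strongly_poly :: "('n::finite \<Rightarrow> 'n \<Rightarrow> bool) \<Rightarrow> bipoly \<Rightarrow> bool" where
  "strongly_poly E Phi \<longleftrightarrow> (\<forall>C. component Phi C \<and> \<not> singular_component Phi C \<longrightarrow>
     (\<exists>f. bij_betw f UNIV C \<and> (\<forall>i j. E i j \<longleftrightarrow> G_adj Phi (f i) (f j))))"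

inductive_set polyfun :: "(complex ^ 'n \<Rightarrow> complex) set" where
  pf_const: "(\<lambda>x. c) \<in> polyfun"
| pf_coord: "(\<lambda>x. x $ i) \<in> polyfun"
| pf_add: "p \<in> polyfun \<Longrightarrow> q \<in> polyfun \<Longrightarrow> (\<lambda>x. p x + q x) \<in> polyfun"
| pf_mult: "p \<in> polyfun \<Longrightarrow> q \<in> polyfun \<Longrightarrow> (\<lambda>x. p x * q x) \<in> polyfun"

definition zariski_closure :: "(complex ^ 'n) set \<Rightarrow> (complex ^ 'n) set" where
  "zariski_closure S = {x. \<forall>p\<in>polyfun. (\<forall>s\<in>S. p s = 0) \<longrightarrow> p x = 0}"

definition improper :: "complex ^ 'n \<Rightarrow> bool" where
  "improper x \<longleftrightarrow> (\<exists>i j. i \<noteq> j \<and> x $ i = x $ j)"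

definition W_set :: "('n::finite \<Rightarrow> 'n \<Rightarrow> bool) \<Rightarrow> bipoly \<Rightarrow> (complex ^ 'n) set" where
  "W_set E Phi = {x. \<forall>i j. E i j \<longrightarrow> bieval Phi (x $ i) (x $ j) = 0}"

definition Z_set :: "('n::finite \<Rightarrow> 'n \<Rightarrow> bool) \<Rightarrow> bipoly \<Rightarrow> (complex ^ 'n) set" where
  "Z_set E Phi = W_set E Phi \<inter> {x. improper x}"

definition U_set :: "('n::finite \<Rightarrow> 'n \<Rightarrow> bool) \<Rightarrow> bipoly \<Rightarrow> (complex ^ 'n) set" where
  "U_set E Phi = zariski_closure (W_set E Phi - Z_set E Phi)"

definition induced_vertices :: "complex ^ 'n \<Rightarrow> complex set" where
  "induced_vertices x = range (\<lambda>i. x $ i)"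

end

theory Submission
  imports Defs "Berlekamp_Zassenhaus.Unique_Factorization_Poly"
begin

(* Only finitely many vertices of G(Phi) are singular: loops are the roots of Phi(x,x), defective
   vertices those of the leading coefficient, and since Phi is squarefree, clearing denominators in
   a Bezout identity between Phi and its y-derivative over K(x) gives A Phi + B Phi_y = r(x) with
   r nonzero, which vanishes at every vertex with a multiple neighbour. Every vertex has finitely
   many neighbours, so the components of the singular vertices cover a countable set S.
   A vertex outside S lies in a nonsingular component, i.e. in a copy of H, and the copy is a proper
   point p of W(H,Phi) with Phi(p_i, y) = a_d(p_i) prod_{j ~ i} (y - p_j). As S is countable, a vertex
   of C is the limit of a fixed coordinate of such points. Since C has no defective vertex, the
   neighbouring coordinates stay bounded, so along the connected graph H a subsequence converges in
   every coordinate, to a point u of U(H,Phi) with coordinates in C. The factorisation survives in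
   the limit, so the neighbours of u_i are exactly the u_j with j ~ i: C is the image of u, and
   i -> u_i is a morphism onto C. If u were proper, C would have no loop, no multiple edge and no
   defective vertex. *)

no_notation fps_nth (infixl \<open>$\<close> 75) and vec_index (infixl \<open>$\<close> 100)

section \<open>Univariate polynomials\<close>

lemma double_root_imp_pderiv_root:
  fixes p :: "'a::idom poly"
  assumes "[:-v, 1:] ^ 2 dvd p"
  shows "poly p v = 0" and "poly (pderiv p) v = 0"
proof -
  from assms obtain s where p: "p = [:-v, 1:] * ([:-v, 1:] * s)"
    by (metis dvdE power2_eq_square mult.assoc)
  have root: "poly [:-v, 1:] v = 0"
    by simp
  show "poly p v = 0"
    unfolding p poly_mult root by simp
  show "poly (pderiv p) v = 0"
    unfolding p pderiv_mult poly_add poly_mult root by simp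
qed

lemma poly_eq_smult_prod_roots:
  fixes q :: "'a::idom poly"
  assumes "finite R" and roots: "\<And>r. r \<in> R \<Longrightarrow> poly q r = 0" and "degree q = card R"
  shows "q = smult (lead_coeff q) (\<Prod>r\<in>R. [:-r, 1:])"
proof -
  have "(\<Prod>r\<in>R. [:-r, 1:]) dvd q"
    using \<open>finite R\<close> roots
  proof (induct R arbitrary: q rule: finite_induct)
    case (insert r R)
    obtain q' where q': "q = [:-r, 1:] * q'"
      using insert.prems poly_eq_0_iff_dvd by blast
    have "poly q' s = 0" if "s \<in> R" for s
      using insert.prems[of s] that insert.hyps(2) by (auto simp: q')
    then have "(\<Prod>r\<in>R. [:-r, 1:]) dvd q'"
      by (rule insert.hyps(3))
    then have "[:-r, 1:] * (\<Prod>r\<in>R. [:-r, 1:]) dvd q"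
      unfolding q' by (rule mult_dvd_mono[OF dvd_refl])
    then show ?case
      by (simp only: prod.insert[OF insert.hyps(1,2)])
  qed simp
  then obtain s where s: "q = (\<Prod>r\<in>R. [:-r, 1:]) * s" ..
  show ?thesis
  proof (cases "s = 0")
    case False
    have "degree (\<Prod>r\<in>R. [:-r, 1:]) = card R"
      using \<open>finite R\<close> by (simp add: degree_prod_eq_sum_degree)
    then have "degree s = 0"
      using \<open>degree q = card R\<close> False \<open>finite R\<close> by (simp add: s degree_mult_eq)
    then obtain c where "s = [:c:]"
      by (rule degree_eq_zeroE)
    then show ?thesis
      by (simp add: s lead_coeff_prod lead_coeff_mult mult.commute)
  qed (simp add: s)
qed

lemma not_double_root_smult_prod:
  fixes f :: "'b \<Rightarrow> 'a::idom"
  assumes "finite N" and "inj_on f N" and "c \<noteq> 0"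
  shows "\<not> [:-w, 1:] ^ 2 dvd smult c (\<Prod>j\<in>N. [:-f j, 1:])"
proof
  assume double: "[:-w, 1:] ^ 2 dvd smult c (\<Prod>j\<in>N. [:-f j, 1:])"
  then have "poly (smult c (\<Prod>j\<in>N. [:-f j, 1:])) w = 0"
    by (rule double_root_imp_pderiv_root)
  then obtain j0 where "j0 \<in> N" and "f j0 = w"
    using \<open>c \<noteq> 0\<close> \<open>finite N\<close> by (auto simp: poly_prod prod_zero_iff)
  then have "(\<Prod>j\<in>N. [:-f j, 1:]) = [:-w, 1:] * (\<Prod>j\<in>N - {j0}. [:-f j, 1:])"
    using \<open>finite N\<close> by (simp add: prod.remove)
  with double have "[:-w, 1:] * [:-w, 1:] dvd [:-w, 1:] * smult c (\<Prod>j\<in>N - {j0}. [:-f j, 1:])"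
    by (simp add: power2_eq_square)
  then have "[:-w, 1:] dvd smult c (\<Prod>j\<in>N - {j0}. [:-f j, 1:])"
    by (subst (asm) dvd_times_left_cancel_iff) simp_all
  then have "poly (smult c (\<Prod>j\<in>N - {j0}. [:-f j, 1:])) w = 0"
    by (simp only: poly_eq_0_iff_dvd)
  then obtain j where "j \<in> N - {j0}" and "f j = w"
    using \<open>c \<noteq> 0\<close> \<open>finite N\<close> by (auto simp: poly_prod prod_zero_iff)
  with \<open>j0 \<in> N\<close> \<open>f j0 = w\<close> \<open>inj_on f N\<close> show False
    by (auto dest: inj_onD)
qed

lemma norm_root_le:
  fixes q :: "'a::real_normed_field poly"
  assumes "poly q z = 0" and "q \<noteq> 0"
  shows "norm z \<le> max 1 ((\<Sum>m<degree q. norm (coeff q m)) / norm (lead_coeff q))"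
proof (cases "norm z \<le> 1")
  case False
  define n where "n = degree q"
  have "n > 0"
  proof (rule ccontr)
    assume "\<not> n > 0"
    then obtain c where "q = [:c:]"
      by (metis n_def degree_eq_zeroE gr0I)
    with assms show False
      by simp
  qed
  have "poly q z = (\<Sum>m<Suc n. coeff q m * z ^ m)"
    unfolding lessThan_Suc_atMost n_def by (rule poly_altdef)
  also have "\<dots> = (\<Sum>m<n. coeff q m * z ^ m) + lead_coeff q * z ^ n"
    by (simp add: n_def)
  finally have "poly q z = (\<Sum>m<n. coeff q m * z ^ m) + lead_coeff q * z ^ n" .
  then have "lead_coeff q * z ^ n = - (\<Sum>m<n. coeff q m * z ^ m)"
    using assms(1) by (metis add_eq_0_iff)
  then have "norm (lead_coeff q * z ^ n) = norm (\<Sum>m<n. coeff q m * z ^ m)"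
    by (simp only: norm_minus_cancel)
  then have "norm (lead_coeff q) * norm z ^ n = norm (\<Sum>m<n. coeff q m * z ^ m)"
    by (simp only: norm_mult norm_power)
  also have "\<dots> \<le> (\<Sum>m<n. norm (coeff q m * z ^ m))"
    by (rule norm_sum)
  also have "\<dots> = (\<Sum>m<n. norm (coeff q m) * norm z ^ m)"
    by (simp only: norm_mult norm_power)
  also have "\<dots> \<le> (\<Sum>m<n. norm (coeff q m) * norm z ^ (n - 1))"
    by (rule sum_mono, rule mult_left_mono, rule power_increasing) (use False in auto)
  finally have "norm (lead_coeff q) * norm z ^ n \<le> (\<Sum>m<n. norm (coeff q m)) * norm z ^ (n - 1)"
    unfolding sum_distrib_right .
  moreover have "norm z ^ n = norm z * norm z ^ (n - 1)"
    using \<open>n > 0\<close> by (metis Suc_diff_1 power_Suc)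
  moreover have "norm z ^ (n - 1) > 0"
    using False by (intro zero_less_power) linarith
  ultimately have "norm (lead_coeff q) * norm z \<le> (\<Sum>m<n. norm (coeff q m))"
    by (simp add: mult.assoc)
  then have "norm z \<le> (\<Sum>m<n. norm (coeff q m)) / norm (lead_coeff q)"
    using assms(2) by (simp add: pos_le_divide_eq mult.commute)
  then show ?thesis
    by (simp add: n_def)
qed simp

section \<open>Evaluating bivariate polynomials\<close>

lemma bieval_eq_poly_poly: "bieval P u v = poly (poly P [:v:]) u"
  using poly_hom.poly_map_poly[of u P "[:v:]"] by (simp add: bieval_def Phi_at_def)

lemma bieval_add [simp]: "bieval (P + Q) u v = bieval P u v + bieval Q u v"
  and bieval_mult [simp]: "bieval (P * Q) u v = bieval P u v * bieval Q u v"
  and bieval_smult [simp]: "bieval (smult c P) u v = poly c u * bieval P u v"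
  and bieval_const [simp]: "bieval [:c:] u v = poly c u"
  by (simp_all add: bieval_eq_poly_poly)

lemma bieval_pderiv: "bieval (pderiv P) u v = poly (pderiv (Phi_at P u)) v"
  by (simp add: bieval_def Phi_at_def poly_hom.map_poly_pderiv)

lemma bieval_eq_sum: "bieval P u v = (\<Sum>m\<le>degree P. poly (coeff P m) u * v ^ m)"
  by (simp add: bieval_eq_poly_poly poly_altdef[of P] poly_sum poly_power)

lemma tendsto_bieval [tendsto_intros]:
  assumes "(f \<longlongrightarrow> a) F" and "(g \<longlongrightarrow> b) F"
  shows "((\<lambda>k. bieval P (f k) (g k)) \<longlongrightarrow> bieval P a b) F"
  unfolding bieval_eq_sum by (intro tendsto_intros assms)

lemma coeff_Phi_at: "coeff (Phi_at P u) m = poly (coeff P m) u"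
  unfolding Phi_at_def by (simp add: coeff_map_poly)

lemma degree_Phi_at:
  assumes "poly (lead_coeff P) u \<noteq> 0"
  shows "degree (Phi_at P u) = degree P"
proof (rule antisym)
  show "degree (Phi_at P u) \<le> degree P"
    by (rule degree_le) (simp add: coeff_Phi_at coeff_eq_0)
  show "degree P \<le> degree (Phi_at P u)"
    using assms by (intro le_degree) (simp add: coeff_Phi_at)
qed

lemma lead_coeff_Phi_at:
  assumes "poly (lead_coeff P) u \<noteq> 0"
  shows "lead_coeff (Phi_at P u) = poly (lead_coeff P) u"
  using assms by (simp add: degree_Phi_at coeff_Phi_at)

lemma defective_iff: "defective Phi u \<longleftrightarrow> poly (lead_coeff Phi) u = 0"
  by (simp add: defective_def partial_degree_def)

lemma Phi_at_nonzero:
  assumes "standard Phi"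
  shows "Phi_at Phi u \<noteq> 0"
proof
  assume "Phi_at Phi u = 0"
  then have "[:-u, 1:] dvd coeff Phi m" for m
    by (metis coeff_0 coeff_Phi_at poly_eq_0_iff_dvd)
  then have "[:[:-u, 1:]:] dvd Phi"
    by (simp add: const_poly_dvd_iff)
  moreover have "degree [:-u, 1:] > 0"
    by simp
  ultimately show False
    using assms unfolding standard_def by blast
qed

lemma finite_neighbours:
  assumes "standard Phi"
  shows "finite {v. G_adj Phi u v}"
  unfolding G_adj_def bieval_def using poly_roots_finite[OF Phi_at_nonzero[OF assms]] .

section \<open>Vertices with a multiple neighbour\<close>

lemma to_fract_of_nat: "to_fract (of_nat n) = of_nat n"
  by (induct n) auto

lemma pderiv_fract_poly_nonzero:
  fixes q :: "'a::{idom, ring_char_0} fract poly"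
  assumes "degree q > 0"
  shows "pderiv q \<noteq> 0"
proof
  assume "pderiv q = 0"
  then have "of_nat (degree q) * lead_coeff q = 0"
    using assms by (metis Suc_diff_1 coeff_0 coeff_pderiv)
  moreover have "(of_nat (degree q) :: 'a fract) \<noteq> 0"
    using assms by (simp flip: to_fract_of_nat)
  ultimately show False
    using assms by auto
qed

lemma prime_dvd_pderiv_fract_poly_imp_square_dvd:
  fixes P q :: "'a::{idom, ring_char_0} fract poly"
  assumes "prime q" and "q dvd P" and "q dvd pderiv P"
  shows "q * q dvd P"
proof -
  from \<open>q dvd P\<close> obtain h where h: "P = q * h" ..
  have "q \<noteq> 0" and "\<not> is_unit q"
    using \<open>prime q\<close> not_prime_0 not_prime_unit by blast+
  then have "degree q > 0"
    using is_unit_iff_degree[OF \<open>q \<noteq> 0\<close>] by simp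
  have "degree (pderiv q) \<le> degree q - 1"
    by (rule degree_le) (auto simp: coeff_pderiv coeff_eq_0)
  have "\<not> q dvd pderiv q"
  proof
    assume "q dvd pderiv q"
    then have "degree q \<le> degree (pderiv q)"
      using pderiv_fract_poly_nonzero[OF \<open>degree q > 0\<close>] by (rule dvd_imp_degree_le)
    with \<open>degree (pderiv q) \<le> degree q - 1\<close> \<open>degree q > 0\<close> show False
      by linarith
  qed
  have "q dvd q * pderiv h + h * pderiv q"
    using \<open>q dvd pderiv P\<close> by (simp add: h pderiv_mult)
  then have "q dvd h * pderiv q"
    by (simp add: dvd_add_right_iff)
  with \<open>\<not> q dvd pderiv q\<close> have "q dvd h"
    using \<open>prime q\<close> prime_dvd_mult_iff by blast
  then show ?thesis
    unfolding h by simp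
qed

lemma squarefree_fract_poly:
  fixes p :: "'a::{factorial_ring_gcd, semiring_gcd_mult_normalize} poly"
  assumes "squarefree p"
  shows "squarefree (map_poly to_fract p)"
proof (rule squarefreeI)
  fix q
  assume "q\<^sup>2 dvd map_poly to_fract p"
  moreover have "map_poly to_fract p \<noteq> 0"
    using assms not_squarefree_0 by auto
  ultimately have "q \<noteq> 0"
    by auto
  obtain c q' where q': "q = smult c (map_poly to_fract q')" "content q' = 1"
    by (rule content_decompose_fract)
  have "q * q = smult (c * c) (map_poly to_fract (q' * q'))"
    by (simp add: q'(1))
  with \<open>q\<^sup>2 dvd map_poly to_fract p\<close> have "map_poly to_fract (q' * q') dvd map_poly to_fract p"
    unfolding power2_eq_square by (metis smult_dvd_cancel)
  then have "q' * q' dvd p"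
    by (rule fract_poly_dvdD) (simp add: content_mult q'(2))
  then have "is_unit q'"
    using squarefreeD[OF assms, of q'] unfolding power2_eq_square by blast
  then have "is_unit (map_poly to_fract q')"
    by (rule fract_poly_is_unit)
  moreover have "c \<noteq> 0"
    using \<open>q \<noteq> 0\<close> unfolding q'(1) by auto
  ultimately show "is_unit q"
    unfolding q'(1) is_unit_smult_iff by (simp add: dvd_field_iff)
qed

lemma squarefree_imp_gcd_pderiv_fract_poly_eq_1:
  fixes p :: "'a::{factorial_ring_gcd, semiring_gcd_mult_normalize, ring_char_0} poly"
  assumes "squarefree p"
  shows "gcd (map_poly to_fract p) (pderiv (map_poly to_fract p)) = 1"
proof (rule ccontr)
  define P where "P = map_poly to_fract p"
  have "squarefree P"
    unfolding P_def using assms by (rule squarefree_fract_poly)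
  assume "gcd (map_poly to_fract p) (pderiv (map_poly to_fract p)) \<noteq> 1"
  then have "\<not> is_unit (gcd P (pderiv P))"
    by (metis P_def is_unit_gcd coprime_iff_gcd_eq_1)
  moreover have "gcd P (pderiv P) \<noteq> 0"
    using \<open>squarefree P\<close> not_squarefree_0 by auto
  ultimately obtain q where "prime q" and q: "q dvd gcd P (pderiv P)"
    using prime_divisor_exists by blast
  have "q * q dvd P"
    using \<open>prime q\<close> dvd_trans[OF q gcd_dvd1] dvd_trans[OF q gcd_dvd2]
    by (rule prime_dvd_pderiv_fract_poly_imp_square_dvd)
  then have "is_unit q"
    using squarefreeD[OF \<open>squarefree P\<close>, of q] unfolding power2_eq_square by blast
  with \<open>prime q\<close> show False
    using not_prime_unit by blast
qed

lemma fract_poly_clear_denominator: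
  fixes p :: "'a::{factorial_ring_gcd, semiring_gcd_mult_normalize} fract poly"
  obtains d p' where "d \<noteq> 0" and "smult (to_fract d) p = map_poly to_fract p'"
proof -
  obtain c p0 where p: "p = smult c (map_poly to_fract p0)"
    using content_decompose_fract[of p] by blast
  obtain a d where c: "c = Fract a d" and "d \<noteq> 0"
    by (rule Fract_cases)
  have "smult (to_fract d) p = map_poly to_fract (smult a p0)"
    using \<open>d \<noteq> 0\<close> by (simp add: p c Fract_conv_to_fract fract_poly_smult)
  with \<open>d \<noteq> 0\<close> show thesis
    using that by blast
qed

lemma squarefree_multiple_root_locus:
  fixes Phi :: bipoly
  assumes "squarefree Phi"
  obtains r where "r \<noteq> 0" and "\<And>u v. [:-v, 1:] ^ 2 dvd Phi_at Phi u \<Longrightarrow> poly r u = 0"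
proof -
  define P where "P = map_poly to_fract Phi"
  obtain A B where AB: "A * P + B * pderiv P = 1"
    using bezout_coefficients_fst_snd[of P "pderiv P"]
      squarefree_imp_gcd_pderiv_fract_poly_eq_1[OF assms]
    by (metis P_def)
  obtain a A' where "a \<noteq> 0" and A': "smult (to_fract a) A = map_poly to_fract A'"
    by (rule fract_poly_clear_denominator)
  obtain b B' where "b \<noteq> 0" and B': "smult (to_fract b) B = map_poly to_fract B'"
    by (rule fract_poly_clear_denominator)
  have "map_poly to_fract (smult b A' * Phi + smult a B' * pderiv Phi)
        = smult (to_fract (a * b)) (A * P + B * pderiv P)"
    by (simp add: P_def fract_poly_smult to_fract_hom.map_poly_pderiv flip: A' B')
      (simp add: smult_add_right algebra_simps)
  also have "\<dots> = map_poly to_fract [:a * b:]"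
    by (simp add: AB to_fract_hom.map_poly_pCons_hom)
  finally have bezout: "smult b A' * Phi + smult a B' * pderiv Phi = [:a * b:]"
    by (simp only: fract_poly_eq_iff)
  show thesis
  proof
    show "a * b \<noteq> 0"
      using \<open>a \<noteq> 0\<close> \<open>b \<noteq> 0\<close> by simp
    fix u v
    assume double: "[:-v, 1:] ^ 2 dvd Phi_at Phi u"
    have "bieval Phi u v = 0"
      using double_root_imp_pderiv_root(1)[OF double] by (simp add: bieval_def)
    moreover have "bieval (pderiv Phi) u v = 0"
      using double_root_imp_pderiv_root(2)[OF double] by (simp add: bieval_pderiv)
    ultimately have "bieval [:a * b:] u v = 0"
      by (simp flip: bezout)
    then show "poly (a * b) u = 0"
      by simp
  qed
qed

section \<open>Singular vertices and components\<close>

definition singular_vertex :: "bipoly \<Rightarrow> complex \<Rightarrow> bool" where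
  "singular_vertex Phi u \<longleftrightarrow>
     G_adj Phi u u \<or> (\<exists>v. [:-v, 1:] ^ 2 dvd Phi_at Phi u) \<or> defective Phi u"

lemma singular_component_iff:
  "singular_component Phi C \<longleftrightarrow> component Phi C \<and> (\<exists>u\<in>C. singular_vertex Phi u)"
  unfolding singular_component_def singular_vertex_def by blast

lemma finite_singular_vertices:
  assumes "standard Phi"
  shows "finite {u. singular_vertex Phi u}"
proof -
  have "squarefree Phi" and "\<exists>u. bieval Phi u u \<noteq> 0"
    using assms by (simp_all add: standard_def)
  define D where "D = (\<Sum>m\<le>degree Phi. coeff Phi m * [:0, 1:] ^ m)"
  have poly_D: "poly D u = bieval Phi u u" for u
    by (simp add: D_def bieval_eq_sum poly_sum)
  then have "D \<noteq> 0"
    using \<open>\<exists>u. bieval Phi u u \<noteq> 0\<close> by auto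
  then have loops: "finite {u. G_adj Phi u u}"
    using poly_roots_finite[of D] by (simp add: G_adj_def poly_D)
  obtain r where "r \<noteq> 0" and r: "\<And>u v. [:-v, 1:] ^ 2 dvd Phi_at Phi u \<Longrightarrow> poly r u = 0"
    using squarefree_multiple_root_locus[OF \<open>squarefree Phi\<close>] by blast
  have "{u. \<exists>v. [:-v, 1:] ^ 2 dvd Phi_at Phi u} \<subseteq> {u. poly r u = 0}"
    using r by blast
  then have multiple: "finite {u. \<exists>v. [:-v, 1:] ^ 2 dvd Phi_at Phi u}"
    using poly_roots_finite[OF \<open>r \<noteq> 0\<close>] by (rule finite_subset)
  have "Phi \<noteq> 0"
    using \<open>squarefree Phi\<close> not_squarefree_0 by blast
  then have defects: "finite {u. defective Phi u}"
    using poly_roots_finite[of "lead_coeff Phi"] by (simp add: defective_iff)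
  have "{u. singular_vertex Phi u} = {u. G_adj Phi u u}
      \<union> {u. \<exists>v. [:-v, 1:] ^ 2 dvd Phi_at Phi u} \<union> {u. defective Phi u}"
    by (auto simp: singular_vertex_def)
  with loops multiple defects show ?thesis
    by (simp only: finite_Un)
qed

lemma symp_G_adj: "symmetric_bipoly Phi \<Longrightarrow> symp (G_adj Phi)"
  by (simp add: symp_def G_adj_def symmetric_bipoly_def)

lemma component_eq_reachable:
  assumes "symmetric_bipoly Phi" and "component Phi C" and "u \<in> C"
  shows "C = {v. (G_adj Phi)\<^sup>*\<^sup>* u v}"
proof -
  obtain b where C: "C = {v. (G_adj Phi)\<^sup>*\<^sup>* b v}"
    using assms(2) by (auto simp: component_def)
  have "(G_adj Phi)\<^sup>*\<^sup>* b u"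
    using assms(3) by (simp add: C)
  moreover from this have "(G_adj Phi)\<^sup>*\<^sup>* u b"
    by (rule sympD[OF symp_rtranclp[OF symp_G_adj[OF assms(1)]]])
  ultimately show ?thesis
    unfolding C by (blast intro: rtranclp_trans)
qed

lemma component_closed:
  assumes "component Phi C" and "x \<in> C" and "G_adj Phi x y"
  shows "y \<in> C"
  using assms by (auto simp: component_def)

lemma component_eq_closed_subset:
  assumes "symmetric_bipoly Phi" and "component Phi C" and "R \<subseteq> C" and "x \<in> R"
    and closed: "\<And>y z. y \<in> R \<Longrightarrow> G_adj Phi y z \<Longrightarrow> z \<in> R"
  shows "C = R"
proof -
  have "x \<in> C"
    using assms(3,4) by blast
  then have C: "C = {z. (G_adj Phi)\<^sup>*\<^sup>* x z}"
    by (rule component_eq_reachable[OF assms(1,2)])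
  have "z \<in> R" if "(G_adj Phi)\<^sup>*\<^sup>* x z" for z
    using that
  proof (induct rule: rtranclp_induct)
    case (step y z)
    then show ?case
      using closed by blast
  qed (rule \<open>x \<in> R\<close>)
  with \<open>R \<subseteq> C\<close> show ?thesis
    unfolding C by auto
qed

lemma countable_reachable:
  assumes "\<And>x. finite {y. R x y}"
  shows "countable {y. R\<^sup>*\<^sup>* x y}"
proof -
  have "finite {y. (R ^^ n) x y}" for n
  proof (induct n)
    case (Suc n)
    have "{y. (R ^^ Suc n) x y} = (\<Union>w\<in>{y. (R ^^ n) x y}. {y. R w y})"
      by auto
    with Suc assms show ?case
      by simp
  qed simp
  moreover have "{y. R\<^sup>*\<^sup>* x y} = (\<Union>n. {y. (R ^^ n) x y})"
    by (auto simp: rtranclp_power)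
  ultimately show ?thesis
    by (simp add: countable_finite)
qed

lemma countable_reachable_from_singular:
  assumes "standard Phi"
  shows "countable {w. \<exists>v. singular_vertex Phi v \<and> (G_adj Phi)\<^sup>*\<^sup>* v w}"
proof -
  have "{w. \<exists>v. singular_vertex Phi v \<and> (G_adj Phi)\<^sup>*\<^sup>* v w}
      = (\<Union>v\<in>{v. singular_vertex Phi v}. {w. (G_adj Phi)\<^sup>*\<^sup>* v w})"
    by auto
  moreover have "countable {v. singular_vertex Phi v}"
    using finite_singular_vertices[OF assms] by (rule countable_finite)
  moreover have "countable {w. (G_adj Phi)\<^sup>*\<^sup>* v w}" for v
    using finite_neighbours[OF assms] by (rule countable_reachable)
  ultimately show ?thesis
    by (simp add: countable_UN)
qed

section \<open>Points that split along H\<close>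

text \<open>Copies of H in G(Phi)^* give generic points. Unlike injectivity, splitting along E is a
  closed condition, so it passes to limits.\<close>
definition splits_along :: "bipoly \<Rightarrow> ('n::finite \<Rightarrow> 'n \<Rightarrow> bool) \<Rightarrow> complex ^ 'n \<Rightarrow> bool" where
  "splits_along Phi E p \<longleftrightarrow>
     (\<forall>i y. bieval Phi (p $ i) y = poly (lead_coeff Phi) (p $ i) * (\<Prod>j\<in>{j. E i j}. y - p $ j))"

definition generic_point :: "bipoly \<Rightarrow> ('n::finite \<Rightarrow> 'n \<Rightarrow> bool) \<Rightarrow> complex ^ 'n \<Rightarrow> bool" where
  "generic_point Phi E p \<longleftrightarrow>
     inj (\<lambda>i. p $ i) \<and> (\<forall>i. \<not> defective Phi (p $ i)) \<and> splits_along Phi E p"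

lemma splits_along_edge:
  assumes "splits_along Phi E p" and "E i j"
  shows "G_adj Phi (p $ i) (p $ j)"
  using assms by (auto simp: splits_along_def G_adj_def prod_zero_iff)

lemma splits_along_adj_iff:
  assumes "splits_along Phi E p" and "\<not> defective Phi (p $ i)"
  shows "G_adj Phi (p $ i) y \<longleftrightarrow> (\<exists>j. E i j \<and> y = p $ j)"
  using assms by (auto simp: splits_along_def G_adj_def defective_iff prod_zero_iff)

lemma splits_along_Phi_at:
  assumes "splits_along Phi E p"
  shows "Phi_at Phi (p $ i) = smult (poly (lead_coeff Phi) (p $ i)) (\<Prod>j\<in>{j. E i j}. [:-(p $ j), 1:])"
  using assms by (intro poly_eq_poly_eq_iff[THEN iffD1] ext)
    (simp add: splits_along_def bieval_def poly_prod)

lemma splits_along_limit: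
  assumes "\<And>k. splits_along Phi E (p k)" and "p \<longlonglongrightarrow> u"
  shows "splits_along Phi E u"
  unfolding splits_along_def
proof (intro allI)
  fix i y
  have coord: "(\<lambda>k. p k $ j) \<longlonglongrightarrow> u $ j" for j
    using assms(2) by (rule tendsto_vec_nth)
  have lim: "(\<lambda>k. bieval Phi (p k $ i) y) \<longlonglongrightarrow> bieval Phi (u $ i) y"
    by (intro tendsto_intros coord)
  have "(\<lambda>k. poly (lead_coeff Phi) (p k $ i) * (\<Prod>j\<in>{j. E i j}. y - p k $ j))
      \<longlonglongrightarrow> poly (lead_coeff Phi) (u $ i) * (\<Prod>j\<in>{j. E i j}. y - u $ j)"
    by (intro tendsto_mult tendsto_poly tendsto_prod tendsto_diff tendsto_const coord)
  then have "(\<lambda>k. bieval Phi (p k $ i) y)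
      \<longlonglongrightarrow> poly (lead_coeff Phi) (u $ i) * (\<Prod>j\<in>{j. E i j}. y - u $ j)"
    using assms(1) unfolding splits_along_def by simp
  with lim show "bieval Phi (u $ i) y = poly (lead_coeff Phi) (u $ i) * (\<Prod>j\<in>{j. E i j}. y - u $ j)"
    by (rule LIMSEQ_unique)
qed

lemma splits_along_not_singular:
  assumes "splits_along Phi E u" and "inj (\<lambda>i. u $ i)" and "\<And>i. \<not> E i i"
    and "\<not> defective Phi (u $ i)"
  shows "\<not> singular_vertex Phi (u $ i)"
proof -
  have "\<not> G_adj Phi (u $ i) (u $ i)"
    using assms by (auto simp: splits_along_adj_iff dest: injD)
  moreover have "\<not> [:-v, 1:] ^ 2 dvd Phi_at Phi (u $ i)" for v
    unfolding splits_along_Phi_at[OF assms(1)]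
    using assms(2,4) by (intro not_double_root_smult_prod) (auto simp: defective_iff inj_on_def)
  ultimately show ?thesis
    using assms(4) by (simp add: singular_vertex_def)
qed

lemma splits_along_morphism_onto:
  assumes "splits_along Phi E u" and "\<forall>i. \<not> defective Phi (u $ i)"
  shows "\<forall>i j. E i j \<longrightarrow> G_adj Phi (u $ i) (u $ j)"
    and "\<forall>v\<in>induced_vertices u. \<forall>w. G_adj Phi v w \<longrightarrow> (\<exists>i j. E i j \<and> u $ i = v \<and> u $ j = w)"
proof -
  show "\<forall>i j. E i j \<longrightarrow> G_adj Phi (u $ i) (u $ j)"
    using splits_along_edge[OF assms(1)] by blast
  show "\<forall>v\<in>induced_vertices u. \<forall>w. G_adj Phi v w \<longrightarrow> (\<exists>i j. E i j \<and> u $ i = v \<and> u $ j = w)"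
  proof (intro ballI allI impI)
    fix v w
    assume "v \<in> induced_vertices u" and "G_adj Phi v w"
    then obtain i where "v = u $ i"
      by (auto simp: induced_vertices_def)
    with \<open>G_adj Phi v w\<close> obtain j where "E i j" and "w = u $ j"
      using splits_along_adj_iff[OF assms(1)] assms(2) by blast
    with \<open>v = u $ i\<close> show "\<exists>i j. E i j \<and> u $ i = v \<and> u $ j = w"
      by blast
  qed
qed

lemma component_eq_induced_vertices:
  assumes "symmetric_bipoly Phi" and "component Phi C" and "splits_along Phi E u"
    and "\<forall>i. u $ i \<in> C" and "\<forall>i. \<not> defective Phi (u $ i)"
  shows "C = induced_vertices u"
proof (rule component_eq_closed_subset[OF assms(1,2)])
  show "induced_vertices u \<subseteq> C" and "u $ i \<in> induced_vertices u" for i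
    using assms(4) by (auto simp: induced_vertices_def)
  show "w \<in> induced_vertices u" if "v \<in> induced_vertices u" and "G_adj Phi v w" for v w
  proof -
    from that obtain j where "w = u $ j"
      using splits_along_morphism_onto(2)[OF assms(3,5)] by blast
    then show ?thesis
      by (simp add: induced_vertices_def)
  qed
qed

lemma improper_if_singular:
  assumes "splits_along Phi E u" and "simple_graph E" and "\<forall>i. \<not> defective Phi (u $ i)"
    and "singular_component Phi (induced_vertices u)"
  shows "improper u"
proof (rule ccontr)
  assume "\<not> improper u"
  then have "inj (\<lambda>i. u $ i)"
    by (auto simp: improper_def inj_def)
  then have "\<not> singular_vertex Phi (u $ i)" for i
    using splits_along_not_singular[OF assms(1)] assms(2,3) by (simp add: simple_graph_def)
  moreover obtain v where "v \<in> induced_vertices u" and "singular_vertex Phi v"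
    using assms(4) by (auto simp: singular_component_iff)
  ultimately show False
    by (auto simp: induced_vertices_def)
qed

lemma generic_point_in_W_minus_Z:
  assumes "generic_point Phi E p"
  shows "p \<in> W_set E Phi - Z_set E Phi"
proof -
  have "inj (\<lambda>i. p $ i)" and "splits_along Phi E p"
    using assms by (simp_all add: generic_point_def)
  then have "p \<in> W_set E Phi" and "\<not> improper p"
    using splits_along_edge unfolding W_set_def G_adj_def improper_def inj_def by blast+
  then show ?thesis
    by (simp add: Z_set_def)
qed

lemma generic_point_of_isomorphism:
  fixes E :: "'n::finite \<Rightarrow> 'n \<Rightarrow> bool"
  assumes "regular_graph E (degree Phi)" and "inj f"
    and adj: "\<And>i j. E i j \<longleftrightarrow> G_adj Phi (f i) (f j)" and "\<And>i. \<not> defective Phi (f i)"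
  shows "generic_point Phi E (\<chi> i. f i)"
proof -
  have "bieval Phi (f i) y = poly (lead_coeff Phi) (f i) * (\<Prod>j\<in>{j. E i j}. y - f j)" for i y
  proof -
    define N where "N = {j. E i j}"
    have "inj_on f N"
      using \<open>inj f\<close> by (rule inj_on_subset) simp
    have "poly (lead_coeff Phi) (f i) \<noteq> 0"
      using assms(4) by (simp add: defective_iff)
    then have deg: "degree (Phi_at Phi (f i)) = degree Phi"
      and lc: "lead_coeff (Phi_at Phi (f i)) = poly (lead_coeff Phi) (f i)"
      by (rule degree_Phi_at, rule lead_coeff_Phi_at)
    have "card (f ` N) = degree Phi"
      using \<open>inj_on f N\<close> assms(1) by (simp add: card_image regular_graph_def N_def)
    moreover have "poly (Phi_at Phi (f i)) r = 0" if "r \<in> f ` N" for r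
      using that adj by (auto simp: N_def G_adj_def bieval_def)
    ultimately have "Phi_at Phi (f i) = smult (poly (lead_coeff Phi) (f i)) (\<Prod>r\<in>f ` N. [:-r, 1:])"
      using poly_eq_smult_prod_roots[of "f ` N" "Phi_at Phi (f i)"] deg lc by simp
    then have "bieval Phi (f i) y = poly (lead_coeff Phi) (f i) * (\<Prod>r\<in>f ` N. y - r)"
      by (simp add: bieval_def poly_prod)
    also have "(\<Prod>r\<in>f ` N. y - r) = (\<Prod>j\<in>N. y - f j)"
      using \<open>inj_on f N\<close> by (simp add: prod.reindex)
    finally show ?thesis
      by (simp add: N_def)
  qed
  then show ?thesis
    using assms(2,4) by (simp add: generic_point_def splits_along_def)
qed

lemma generic_point_through:
  fixes E :: "'n::finite \<Rightarrow> 'n \<Rightarrow> bool"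
  assumes "symmetric_bipoly Phi" and "regular_graph E (degree Phi)" and "strongly_poly E Phi"
    and regular: "\<And>v. singular_vertex Phi v \<Longrightarrow> \<not> (G_adj Phi)\<^sup>*\<^sup>* v w"
  shows "\<exists>p\<in>{p. generic_point Phi E p}. \<exists>i. p $ i = w"
proof -
  define Cw where "Cw = {x. (G_adj Phi)\<^sup>*\<^sup>* w x}"
  have "component Phi Cw"
    by (auto simp: component_def Cw_def)
  have nonsingular: "\<not> singular_vertex Phi x" if "x \<in> Cw" for x
  proof
    assume "singular_vertex Phi x"
    moreover have "(G_adj Phi)\<^sup>*\<^sup>* x w"
      using that symp_rtranclp[OF symp_G_adj[OF assms(1)]] by (simp add: Cw_def sympD)
    ultimately show False
      using regular by blast
  qed
  then have "\<not> singular_component Phi Cw"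
    by (simp add: singular_component_iff)
  with \<open>component Phi Cw\<close> obtain f where f: "bij_betw f UNIV Cw"
    and adj: "\<And>i j. E i j \<longleftrightarrow> G_adj Phi (f i) (f j)"
    using assms(3) unfolding strongly_poly_def by blast
  have "f i \<in> Cw" for i
    using f by (auto simp: bij_betw_def)
  then have "\<not> defective Phi (f i)" for i
    using nonsingular by (simp add: singular_vertex_def)
  then have "generic_point Phi E (\<chi> i. f i)"
    using assms(2) f adj by (intro generic_point_of_isomorphism) (simp_all add: bij_betw_def)
  moreover have "w \<in> f ` UNIV"
    using f by (simp add: bij_betw_def Cw_def)
  then obtain i where "f i = w"
    by blast
  ultimately show ?thesis
    by (intro bexI[of _ "\<chi> i. f i"]) auto
qed

section \<open>Limits of generic points\<close>

lemma Bseq_neighbours: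
  assumes "f \<longlonglongrightarrow> c" and "\<not> defective Phi c" and "\<And>k. G_adj Phi (f k) (g k)"
  shows "Bseq g"
proof -
  define a where "a = lead_coeff Phi"
  define B where "B x = (\<Sum>m<degree Phi. norm (poly (coeff Phi m) x)) / norm (poly a x)" for x
  have "poly a c \<noteq> 0"
    using assms(2) by (simp add: a_def defective_iff)
  then have "(\<lambda>k. B (f k)) \<longlonglongrightarrow> B c"
    unfolding B_def by (intro tendsto_intros assms(1)) simp
  then have "eventually (\<lambda>k. B (f k) < B c + 1) sequentially"
    by (rule order_tendstoD) simp
  moreover have "eventually (\<lambda>k. poly a (f k) \<noteq> 0) sequentially"
    using tendsto_poly[OF assms(1)] \<open>poly a c \<noteq> 0\<close> by (rule tendsto_imp_eventually_ne)
  ultimately have "eventually (\<lambda>k. norm (g k) \<le> max 1 (B c + 1)) sequentially"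
  proof eventually_elim
    case (elim k)
    have "poly (Phi_at Phi (f k)) (g k) = 0"
      using assms(3)[of k] by (simp add: G_adj_def bieval_def)
    moreover have "degree (Phi_at Phi (f k)) = degree Phi"
      using elim(2) unfolding a_def by (rule degree_Phi_at)
    moreover have lc: "lead_coeff (Phi_at Phi (f k)) = poly a (f k)"
      using elim(2) unfolding a_def by (rule lead_coeff_Phi_at)
    moreover have "Phi_at Phi (f k) \<noteq> 0"
      using lc elim(2) by auto
    ultimately have "norm (g k) \<le> max 1 (B (f k))"
      using norm_root_le[of "Phi_at Phi (f k)" "g k"] by (simp add: B_def coeff_Phi_at)
    with elim(1) show ?case
      by linarith
  qed
  then show "Bseq g"
    by (rule BfunI)
qed

lemma convergent_subseq_neighbours:
  assumes "f \<longlonglongrightarrow> c" and "\<not> defective Phi c" and "\<And>k. G_adj Phi (f k) (g k)"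
  obtains r d where "strict_mono r" and "(g \<circ> r) \<longlonglongrightarrow> d" and "G_adj Phi c d"
proof -
  obtain d r where r: "strict_mono r" and d: "(g \<circ> r) \<longlonglongrightarrow> d"
    using bounded_imp_convergent_subsequence Bseq_neighbours[OF assms] Bseq_eq_bounded by metis
  have "(\<lambda>k. bieval Phi (f (r k)) (g (r k))) \<longlonglongrightarrow> bieval Phi c d"
    using LIMSEQ_subseq_LIMSEQ[OF assms(1) r] d by (intro tendsto_bieval) (simp_all add: o_def)
  moreover have "(\<lambda>k. bieval Phi (f (r k)) (g (r k))) = (\<lambda>k. 0)"
    using assms(3) by (simp add: G_adj_def)
  ultimately have "G_adj Phi c d"
    by (simp add: G_adj_def LIMSEQ_const_iff)
  with r d show thesis
    by (rule that)
qed

lemma rtranclp_edge_leaving: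
  assumes "R\<^sup>*\<^sup>* a b" and "a \<in> T" and "b \<notin> T"
  obtains i j where "i \<in> T" and "j \<notin> T" and "R i j"
  using assms by (induct rule: rtranclp_induct) auto

lemma grow_to_UNIV:
  fixes P :: "'n::finite set \<Rightarrow> bool"
  assumes "P T" and step: "\<And>T. P T \<Longrightarrow> T \<noteq> UNIV \<Longrightarrow> \<exists>j. j \<notin> T \<and> P (insert j T)"
  shows "P UNIV"
proof -
  have "P T \<Longrightarrow> card (- T) = n \<Longrightarrow> P UNIV" for n T
  proof (induct n arbitrary: T)
    case 0
    then show ?case
      by (metis card_0_eq compl_bot_eq double_compl finite)
  next
    case (Suc n)
    then have "T \<noteq> UNIV"
      by auto
    then obtain j where "j \<notin> T" and "P (insert j T)"
      using step Suc.prems(1) by blast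
    moreover have "card (- insert j T) = n"
      using Suc.prems(2) \<open>j \<notin> T\<close> by (simp add: Compl_insert card_Diff_singleton)
    ultimately show ?case
      using Suc.hyps by blast
  qed
  with assms(1) show ?thesis
    by blast
qed

lemma convergent_subseq_insert:
  fixes p :: "nat \<Rightarrow> complex ^ 'n::finite"
  assumes split: "\<And>k. splits_along Phi E (p k)" and "E i j" and "i \<in> T" and r: "strict_mono r"
    and c: "\<And>i. i \<in> T \<Longrightarrow> (\<lambda>k. p (r k) $ i) \<longlonglongrightarrow> c i \<and> c i \<in> C"
    and nondefective: "\<And>x. x \<in> C \<Longrightarrow> \<not> defective Phi x"
    and closed: "\<And>x y. x \<in> C \<Longrightarrow> G_adj Phi x y \<Longrightarrow> y \<in> C"
  obtains r' c' where "strict_mono r'"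
    and "\<forall>i\<in>insert j T. (\<lambda>k. p (r' k) $ i) \<longlonglongrightarrow> c' i \<and> c' i \<in> C"
proof -
  have ci: "(\<lambda>k. p (r k) $ i) \<longlonglongrightarrow> c i" "c i \<in> C"
    using c[OF \<open>i \<in> T\<close>] by simp_all
  have "G_adj Phi (p (r k) $ i) (p (r k) $ j)" for k
    using split \<open>E i j\<close> by (rule splits_along_edge)
  then obtain r' d where r': "strict_mono r'" and d: "((\<lambda>k. p (r k) $ j) \<circ> r') \<longlonglongrightarrow> d"
    and "G_adj Phi (c i) d"
    by (rule convergent_subseq_neighbours[OF ci(1) nondefective[OF ci(2)]])
  have "d \<in> C"
    using closed[OF ci(2) \<open>G_adj Phi (c i) d\<close>] .
  have "strict_mono (r \<circ> r')"
    using r r' by (rule strict_mono_o)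
  moreover have "\<forall>i'\<in>insert j T. (\<lambda>k. p ((r \<circ> r') k) $ i') \<longlonglongrightarrow> (c(j := d)) i' \<and> (c(j := d)) i' \<in> C"
  proof
    fix i'
    assume "i' \<in> insert j T"
    show "(\<lambda>k. p ((r \<circ> r') k) $ i') \<longlonglongrightarrow> (c(j := d)) i' \<and> (c(j := d)) i' \<in> C"
    proof (cases "i' = j")
      case True
      then show ?thesis
        using d \<open>d \<in> C\<close> by (simp add: o_def)
    next
      case False
      with \<open>i' \<in> insert j T\<close> have "(\<lambda>k. p (r k) $ i') \<longlonglongrightarrow> c i' \<and> c i' \<in> C"
        using c by simp
      then show ?thesis
        using False LIMSEQ_subseq_LIMSEQ[OF _ r', of "\<lambda>k. p (r k) $ i'"] by (simp add: o_def)
    qed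
  qed
  ultimately show thesis
    by (rule that)
qed

lemma convergent_subseq_in_component:
  fixes p :: "nat \<Rightarrow> complex ^ 'n::finite"
  assumes "connected_graph E" and split: "\<And>k. splits_along Phi E (p k)"
    and "(\<lambda>k. p k $ i0) \<longlonglongrightarrow> v" and "v \<in> C"
    and nondefective: "\<And>x. x \<in> C \<Longrightarrow> \<not> defective Phi x"
    and closed: "\<And>x y. x \<in> C \<Longrightarrow> G_adj Phi x y \<Longrightarrow> y \<in> C"
  obtains r u where "strict_mono r" and "(p \<circ> r) \<longlonglongrightarrow> u" and "\<forall>i. u $ i \<in> C"
proof -
  define P where "P T \<longleftrightarrow> i0 \<in> T \<and>
    (\<exists>r c. strict_mono r \<and> (\<forall>i\<in>T. (\<lambda>k. p (r k) $ i) \<longlonglongrightarrow> c i \<and> c i \<in> C))" for T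
  have "P {i0}"
    unfolding P_def using assms(3,4) strict_mono_id by (auto intro!: exI[of _ id] exI[of _ "\<lambda>_. v"])
  moreover have "\<exists>j. j \<notin> T \<and> P (insert j T)" if "P T" and "T \<noteq> UNIV" for T
  proof -
    obtain r c where "i0 \<in> T" and r: "strict_mono r"
      and c: "\<And>i. i \<in> T \<Longrightarrow> (\<lambda>k. p (r k) $ i) \<longlonglongrightarrow> c i \<and> c i \<in> C"
      using \<open>P T\<close> unfolding P_def by blast
    obtain j0 where "j0 \<notin> T"
      using \<open>T \<noteq> UNIV\<close> by blast
    have "E\<^sup>*\<^sup>* i0 j0"
      using \<open>connected_graph E\<close> by (simp add: connected_graph_def)
    then obtain i j where "i \<in> T" and "j \<notin> T" and "E i j"
      using \<open>i0 \<in> T\<close> \<open>j0 \<notin> T\<close> by (rule rtranclp_edge_leaving)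
    obtain r' c' where "strict_mono r'"
      and "\<forall>i\<in>insert j T. (\<lambda>k. p (r' k) $ i) \<longlonglongrightarrow> c' i \<and> c' i \<in> C"
      by (rule convergent_subseq_insert[OF split \<open>E i j\<close> \<open>i \<in> T\<close> r c nondefective closed])
    then have "P (insert j T)"
      using \<open>i0 \<in> T\<close> unfolding P_def by blast
    with \<open>j \<notin> T\<close> show ?thesis
      by blast
  qed
  ultimately have "P UNIV"
    by (rule grow_to_UNIV)
  then obtain r c where r: "strict_mono r" and c: "\<And>i. (\<lambda>k. p (r k) $ i) \<longlonglongrightarrow> c i \<and> c i \<in> C"
    unfolding P_def by blast
  have "(p \<circ> r) \<longlonglongrightarrow> (\<chi> i. c i)"
    using c by (intro vec_tendstoI) (simp add: o_def)
  moreover have "\<forall>i. (\<chi> i. c i) $ i \<in> C"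
    using c by simp
  ultimately show thesis
    by (rule that[OF r])
qed

lemma closure_Compl_countable:
  fixes S :: "'a::euclidean_space set"
  assumes "countable S"
  shows "closure (- S) = UNIV"
proof -
  have "interior S = {}"
  proof (rule ccontr)
    assume "interior S \<noteq> {}"
    then obtain x where "x \<in> interior S"
      by blast
    then obtain e where "e > 0" and "ball x e \<subseteq> S"
      unfolding mem_interior by blast
    with ball_minus_countable_nonempty[OF assms \<open>e > 0\<close>] show False
      by blast
  qed
  then show ?thesis
    by (simp add: closure_complement)
qed

lemma closure_coordinate_image_cover:
  fixes A :: "('a::euclidean_space ^ 'n::finite) set"
  assumes "countable S" and covered: "\<And>w. w \<notin> S \<Longrightarrow> \<exists>p\<in>A. \<exists>i. p $ i = w"
  obtains i where "b \<in> closure ((\<lambda>p. p $ i) ` A)"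
proof -
  have "- S \<subseteq> (\<Union>i. (\<lambda>p. p $ i) ` A)"
  proof
    fix w
    assume "w \<in> - S"
    then obtain p i where "p \<in> A" and "p $ i = w"
      using covered by blast
    then show "w \<in> (\<Union>i. (\<lambda>p. p $ i) ` A)"
      by blast
  qed
  also have "\<dots> \<subseteq> (\<Union>i. closure ((\<lambda>p. p $ i) ` A))"
    by (intro UN_mono subset_refl closure_subset)
  finally have "closure (- S) \<subseteq> (\<Union>i. closure ((\<lambda>p. p $ i) ` A))"
    by (rule closure_minimal) (simp add: closed_UN)
  then show thesis
    using closure_Compl_countable[OF \<open>countable S\<close>] that by blast
qed

lemma fixed_coordinate_limit:
  fixes A :: "('a::euclidean_space ^ 'n::finite) set"
  assumes "countable S" and "\<And>w. w \<notin> S \<Longrightarrow> \<exists>p\<in>A. \<exists>i. p $ i = w"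
  obtains i p where "\<And>k. p k \<in> A" and "(\<lambda>k. p k $ i) \<longlonglongrightarrow> b"
proof -
  obtain i where "b \<in> closure ((\<lambda>p. p $ i) ` A)"
    using assms by (rule closure_coordinate_image_cover)
  then obtain x where x: "\<forall>k. x k \<in> (\<lambda>p. p $ i) ` A" and "x \<longlonglongrightarrow> b"
    unfolding closure_sequential by blast
  have "\<forall>k. \<exists>q. q \<in> A \<and> q $ i = x k"
  proof
    fix k
    from x obtain q where "q \<in> A" and "x k = q $ i"
      by blast
    then show "\<exists>q. q \<in> A \<and> q $ i = x k"
      by auto
  qed
  then obtain p where p: "\<forall>k. p k \<in> A \<and> p k $ i = x k"
    by (rule choice[THEN exE])
  show thesis
  proof (rule that)
    show "p k \<in> A" for k
      using p by simp
    have "(\<lambda>k. p k $ i) = x"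
      using p by simp
    with \<open>x \<longlonglongrightarrow> b\<close> show "(\<lambda>k. p k $ i) \<longlonglongrightarrow> b"
      by simp
  qed
qed

lemma continuous_on_polyfun: "P \<in> polyfun \<Longrightarrow> continuous_on UNIV P"
  by (induct rule: polyfun.induct)
    (intro continuous_on_const continuous_on_component continuous_on_id continuous_on_add
      continuous_on_mult; assumption)+

lemma closure_subset_zariski_closure: "closure S \<subseteq> zariski_closure S"
proof
  fix x
  assume "x \<in> closure S"
  show "x \<in> zariski_closure S"
    unfolding zariski_closure_def
  proof (intro CollectI ballI impI)
    fix P
    assume "P \<in> polyfun" and "\<forall>s\<in>S. P s = 0"
    then have "S \<subseteq> P -` {0}"
      by blast
    moreover have "closed (P -` {0})"
      using closed_singleton continuous_on_polyfun[OF \<open>P \<in> polyfun\<close>] by (rule closed_vimage)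
    ultimately have "closure S \<subseteq> P -` {0}"
      by (rule closure_minimal)
    with \<open>x \<in> closure S\<close> show "P x = 0"
      by blast
  qed
qed

lemma limit_of_generic_points_in_component:
  fixes E :: "'n::finite \<Rightarrow> 'n \<Rightarrow> bool"
  assumes "standard Phi" and "symmetric_bipoly Phi" and "regular_graph E (degree Phi)"
    and "connected_graph E" and "strongly_poly E Phi"
    and "component Phi C" and "b \<in> C" and nondefective: "\<forall>x\<in>C. \<not> defective Phi x"
  obtains u where "u \<in> closure (W_set E Phi - Z_set E Phi)" and "splits_along Phi E u"
    and "\<forall>i. u $ i \<in> C"
proof -
  have "\<exists>p\<in>{p. generic_point Phi E p}. \<exists>i. p $ i = w"
    if "w \<notin> {w. \<exists>v. singular_vertex Phi v \<and> (G_adj Phi)\<^sup>*\<^sup>* v w}" for w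
  proof (rule generic_point_through[OF assms(2,3,5)])
    show "\<not> (G_adj Phi)\<^sup>*\<^sup>* v w" if "singular_vertex Phi v" for v
      using \<open>w \<notin> _\<close> that by blast
  qed
  then obtain i0 p where generic: "\<And>k. p k \<in> {p. generic_point Phi E p}"
    and "(\<lambda>k. p k $ i0) \<longlonglongrightarrow> b"
    using fixed_coordinate_limit[OF countable_reachable_from_singular[OF assms(1)]] by blast
  have splits: "splits_along Phi E (p k)" for k
    using generic by (simp add: generic_point_def)
  obtain r u where "strict_mono r" and lim: "(p \<circ> r) \<longlonglongrightarrow> u" and uC: "\<forall>i. u $ i \<in> C"
    by (rule convergent_subseq_in_component[OF assms(4) splits \<open>(\<lambda>k. p k $ i0) \<longlonglongrightarrow> b\<close> \<open>b \<in> C\<close>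
          bspec[OF nondefective] component_closed[OF assms(6)]])
  have "(p \<circ> r) k \<in> W_set E Phi - Z_set E Phi" for k
    using generic_point_in_W_minus_Z generic[of "r k"] by simp
  then have "u \<in> closure (W_set E Phi - Z_set E Phi)"
    using lim unfolding closure_sequential by blast
  moreover have "splits_along Phi E u"
    by (rule splits_along_limit[OF _ lim]) (simp add: splits)
  ultimately show thesis
    using uC by (rule that)
qed

theorem mainTheorem8:
  fixes Phi :: bipoly and d :: nat and E :: "'n::finite \<Rightarrow> 'n \<Rightarrow> bool" and C :: "complex set"
  assumes "standard Phi" and "symmetric_bipoly Phi" and "partial_degree Phi = d"
    and "simple_graph E" and "connected_graph E" and "regular_graph E d"
    and "strongly_poly E Phi"
    and "singular_component Phi C" and "\<forall>u\<in>C. \<not> defective Phi u"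
  shows "\<exists>u \<in> U_set E Phi. improper u \<and> C = induced_vertices u
           \<and> (\<forall>i j. E i j \<longrightarrow> G_adj Phi (u $ i) (u $ j))
           \<and> (\<forall>v\<in>C. \<forall>w\<in>C. G_adj Phi v w \<longrightarrow> (\<exists>i j. E i j \<and> u $ i = v \<and> u $ j = w))"
proof -
  have "component Phi C" and "\<exists>b\<in>C. singular_vertex Phi b"
    using assms(8) by (simp_all add: singular_component_iff)
  then obtain b where "b \<in> C"
    by blast
  have "regular_graph E (degree Phi)"
    using assms(3,6) by (simp add: partial_degree_def)
  then obtain u where closure: "u \<in> closure (W_set E Phi - Z_set E Phi)"
    and split: "splits_along Phi E u" and uC: "\<forall>i. u $ i \<in> C"
    by (rule limit_of_generic_points_in_component[OF assms(1,2) _ assms(5,7)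
        \<open>component Phi C\<close> \<open>b \<in> C\<close> assms(9)])
  have nondefective: "\<forall>i. \<not> defective Phi (u $ i)"
    using uC assms(9) by blast
  have C_eq: "C = induced_vertices u"
    using assms(2) \<open>component Phi C\<close> split uC nondefective by (rule component_eq_induced_vertices)
  have "u \<in> U_set E Phi"
    using closure closure_subset_zariski_closure unfolding U_set_def by blast
  moreover have "improper u"
    using split assms(4) nondefective assms(8) unfolding C_eq by (rule improper_if_singular)
  ultimately show ?thesis
    using splits_along_morphism_onto[OF split nondefective] unfolding C_eq by blast
qed

end
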